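(* Let $0<p\le1/2$ and consider $\{0,1\}^n$ with the measure $\mu_p$. If $f:\{0,1\}^n\to\mathbb{R}$ satisfies $\hat f(S)=0$ for all $|S|>d$, then for every $q\ge2$, \[ \|f\|_q\le\Big(\frac{1-p}{p\lfloor\log(1/p)\rfloor}\cdot(q-1)\Big)^{d/2}\|f\|_2. \]
   Context: $\mu_p$ is the product measure on $\{0,1\}^n$ with $\mu_p(x)=p^{\sum_i x_i}(1-p)^{n-\sum_i x_i}$, and $\|f\|_q=(\mathbb{E}_{\mu_p}|f|^q)^{1/q}$. Elements of $\{0,1\}^n$ are identified with subsets of $\{1,\dots,n\}$; for $S,T\subseteq\{1,\dots,n\}$, $u_S(T)=\big(-\sqrt{(1-p)/p}\big)^{|S\cap T|}\big(\sqrt{p/(1-p)}\big)^{|S\setminus T|}$. These form an orthonormal basis of $L^2(\mu_p)$ and $f=\sum_S\hat f(S)u_S$ with Fourier–Walsh coefficients $\hat f(S)=\mathbb{E}_{\mu_p}[fu_S]$. $\log$ is base 2. *)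

theory Defs
  imports Complex_Main
begin

text \<open>Points of the cube {0,1}^n are identified with subsets of {1..n}.\<close>

definition mu_p :: "real \<Rightarrow> nat \<Rightarrow> nat set \<Rightarrow> real" where
  "mu_p p n T = p ^ card T * (1 - p) ^ (n - card T)"

definition expect_p :: "real \<Rightarrow> nat \<Rightarrow> (nat set \<Rightarrow> real) \<Rightarrow> real" where
  "expect_p p n g = (\<Sum>T \<in> Pow {1..n}. mu_p p n T * g T)"

definition walsh_u :: "real \<Rightarrow> nat set \<Rightarrow> nat set \<Rightarrow> real" where
  "walsh_u p S T = (- sqrt ((1 - p) / p)) ^ card (S \<inter> T) * (sqrt (p / (1 - p))) ^ card (S - T)"

definition fourier_coeff :: "real \<Rightarrow> nat \<Rightarrow> (nat set \<Rightarrow> real) \<Rightarrow> nat set \<Rightarrow> real" where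
  "fourier_coeff p n f S = expect_p p n (\<lambda>T. f T * walsh_u p S T)"

definition qnorm_p :: "real \<Rightarrow> nat \<Rightarrow> real \<Rightarrow> (nat set \<Rightarrow> real) \<Rightarrow> real" where
  "qnorm_p p n q f = (expect_p p n (\<lambda>T. \<bar>f T\<bar> powr q)) powr (1 / q)"

end

theory Submission
  imports Defs "HOL-Analysis.Analysis"
begin

text \<open>Let \<open>k = \<lfloor>log (1/p)\<rfloor>\<close>. A \<open>p\<close>-biased bit can be realised inside \<open>k\<close> fair bits, and the
  Bonami--Gross two-point inequality bounds the \<open>q\<close>-th moments of sums of fair bits; by Jensen's
  inequality this gives \<open>(2,q)\<close>-hypercontractivity of the noise operator \<open>T\<^sub>\<rho>\<close> on one
  \<open>p\<close>-biased coordinate for \<open>\<rho>\<^sup>2 = k p / ((q - 1)(1 - p))\<close>. Minkowski's inequality tensorizes this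
  to the whole cube, and a function of degree \<open>d\<close> is \<open>T\<^sub>\<rho> g\<close> with
  \<open>\<parallel>g\<parallel>\<^sub>2 \<le> \<rho>\<^bsup>-d\<^esup> \<parallel>f\<parallel>\<^sub>2\<close>.\<close>

lemma sum_Pow_atLeastAtMost_Suc:
  "(\<Sum>T\<in>Pow {1..Suc n}. h T) = (\<Sum>T\<in>Pow {1..n}. h T) + (\<Sum>T\<in>Pow {1..n}. h (insert (Suc n) T))"
proof -
  have inj: "inj_on (insert (Suc n)) (Pow {1..n})"
    by (rule inj_onI) (metis Diff_insert_absorb PowD atLeastAtMost_iff not_less_eq_eq order_refl subsetD)
  have "{1..Suc n} = insert (Suc n) {1..n}" by auto
  then have "(\<Sum>T\<in>Pow {1..Suc n}. h T) = (\<Sum>T\<in>Pow {1..n}. h T) + (\<Sum>T\<in>insert (Suc n) ` Pow {1..n}. h T)"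
    by (simp only: Pow_insert) (intro sum.union_disjoint; auto)
  also have "(\<Sum>T\<in>insert (Suc n) ` Pow {1..n}. h T) = (\<Sum>T\<in>Pow {1..n}. h (insert (Suc n) T))"
    using sum.reindex[OF inj] by simp
  finally show ?thesis .
qed

lemma card_le_of_Pow_atLeastAtMost: "T \<in> Pow {1..n} \<Longrightarrow> card T \<le> n"
  using card_mono[of "{1..n}" T] by auto

lemma card_insert_Suc_of_Pow_atLeastAtMost:
  "T \<in> Pow {1..n} \<Longrightarrow> card (insert (Suc n) T) = Suc (card T)"
  by (subst card_insert_disjoint) (auto intro: finite_subset)

lemma mu_p_nonneg: "0 \<le> p \<Longrightarrow> p \<le> 1 \<Longrightarrow> 0 \<le> mu_p p n T"
  unfolding mu_p_def by simp

lemma mu_p_pos: "0 < p \<Longrightarrow> p < 1 \<Longrightarrow> 0 < mu_p p n T"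
  unfolding mu_p_def by simp

lemma mu_p_half: "T \<in> Pow {1..n} \<Longrightarrow> mu_p (1/2) n T = (1/2) ^ n"
  unfolding mu_p_def by (simp add: card_le_of_Pow_atLeastAtMost flip: power_add)

lemma expect_p_0: "expect_p p 0 g = g {}"
  unfolding expect_p_def mu_p_def by simp

lemma expect_p_Suc:
  "expect_p p (Suc n) g = expect_p p n (\<lambda>T. p * g (insert (Suc n) T) + (1 - p) * g T)"
proof -
  have mu_Suc: "mu_p p (Suc n) T = (1 - p) * mu_p p n T"
    and mu_Suc_insert: "mu_p p (Suc n) (insert (Suc n) T) = p * mu_p p n T" if "T \<in> Pow {1..n}" for T
    using card_le_of_Pow_atLeastAtMost[OF that] card_insert_Suc_of_Pow_atLeastAtMost[OF that]
    unfolding mu_p_def by (simp_all add: Suc_diff_le)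
  show ?thesis
    unfolding expect_p_def sum_Pow_atLeastAtMost_Suc sum.distrib[symmetric]
    by (intro sum.cong refl) (simp only: mu_Suc mu_Suc_insert; simp add: algebra_simps)
qed

lemma expect_p_cong:
  "(\<And>T. T \<in> Pow {1..n} \<Longrightarrow> g T = h T) \<Longrightarrow> expect_p p n g = expect_p p n h"
  unfolding expect_p_def by (auto intro: sum.cong)

lemma expect_p_mono:
  "0 \<le> p \<Longrightarrow> p \<le> 1 \<Longrightarrow> (\<And>T. T \<in> Pow {1..n} \<Longrightarrow> g T \<le> h T) \<Longrightarrow> expect_p p n g \<le> expect_p p n h"
  unfolding expect_p_def by (auto intro!: sum_mono mult_left_mono mu_p_nonneg)

lemma expect_p_add: "expect_p p n (\<lambda>T. g T + h T) = expect_p p n g + expect_p p n h"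
  unfolding expect_p_def by (simp add: algebra_simps sum.distrib)

lemma expect_p_cmult: "expect_p p n (\<lambda>T. c * g T) = c * expect_p p n g"
  unfolding expect_p_def by (simp add: algebra_simps sum_distrib_left)

lemma expect_p_const: "expect_p p n (\<lambda>T. c) = c"
  by (induction n) (simp_all add: expect_p_0 expect_p_Suc algebra_simps)

lemma expect_p_nonneg:
  "0 \<le> p \<Longrightarrow> p \<le> 1 \<Longrightarrow> (\<And>T. T \<in> Pow {1..n} \<Longrightarrow> 0 \<le> g T) \<Longrightarrow> 0 \<le> expect_p p n g"
  using expect_p_mono[of p n "\<lambda>_. 0" g] by (simp add: expect_p_const)

lemma expect_half_eq_sum: "expect_p (1/2) n g = (\<Sum>T\<in>Pow {1..n}. (1/2) ^ n * g T)"
  unfolding expect_p_def by (simp add: mu_p_half)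

lemma abs_powr_eq_power2_powr: "\<bar>a::real\<bar> powr q = (a\<^sup>2) powr (q / 2)"
proof (cases "a = 0")
  case False
  then have "a\<^sup>2 = \<bar>a\<bar> powr 2" by (simp add: powr_realpow)
  then show ?thesis using powr_powr[of "\<bar>a\<bar>" 2 "q / 2"] by simp
qed simp

lemma convex_on_powr_nonneg:
  fixes r :: real
  assumes "r \<ge> 1"
  shows "convex_on {0..} (\<lambda>x. x powr r)"
proof (rule convex_on_linorderI)
  fix t x y :: real
  assume t: "0 < t" "t < 1" and xy: "x \<in> {0..}" "y \<in> {0..}" "x < y"
  show "((1 - t) *\<^sub>R x + t *\<^sub>R y) powr r \<le> (1 - t) * x powr r + t * y powr r"
  proof (cases "x = 0")
    case True
    have "(t * y) powr r = t powr r * y powr r"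
      using t xy by (simp add: powr_mult)
    also have "\<dots> \<le> t powr 1 * y powr r"
      using assms t by (intro mult_right_mono powr_mono') auto
    finally show ?thesis using True t by simp
  next
    case False
    then show ?thesis
      using convex_onD[OF powr_convex[OF assms], of t x y] t xy by simp
  qed
qed simp

lemma convex_on_abs_add_powr:
  fixes a r :: real
  assumes "r \<ge> 1"
  shows "convex_on UNIV (\<lambda>z. \<bar>a + z\<bar> powr r)"
proof (rule convex_onI)
  fix t x y :: real
  assume t: "0 < t" "t < 1"
  have "\<bar>a + ((1 - t) *\<^sub>R x + t *\<^sub>R y)\<bar> = \<bar>(1 - t) * (a + x) + t * (a + y)\<bar>"
    by (simp add: algebra_simps)
  also have "\<dots> \<le> (1 - t) * \<bar>a + x\<bar> + t * \<bar>a + y\<bar>"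
    using abs_triangle_ineq[of "(1 - t) * (a + x)" "t * (a + y)"] t by (simp add: abs_mult)
  finally have "\<bar>a + ((1 - t) *\<^sub>R x + t *\<^sub>R y)\<bar> powr r \<le> ((1 - t) * \<bar>a + x\<bar> + t * \<bar>a + y\<bar>) powr r"
    using assms by (intro powr_mono2) auto
  also have "\<dots> \<le> (1 - t) * \<bar>a + x\<bar> powr r + t * \<bar>a + y\<bar> powr r"
    using convex_onD[OF convex_on_powr_nonneg[OF assms], of t "\<bar>a + x\<bar>" "\<bar>a + y\<bar>"] t by simp
  finally show "\<bar>a + ((1 - t) *\<^sub>R x + t *\<^sub>R y)\<bar> powr r \<le> (1 - t) * \<bar>a + x\<bar> powr r + t * \<bar>a + y\<bar> powr r" .
qed simp

lemma expect_p_powr_add_le_pos: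
  fixes g h :: "nat set \<Rightarrow> real" and A B r p :: real
  assumes p: "0 \<le> p" "p \<le> 1" and r: "r \<ge> 1"
    and gh: "\<And>T. T \<in> Pow {1..n} \<Longrightarrow> 0 \<le> g T \<and> 0 \<le> h T"
    and AB: "0 < A" "0 < B"
    and Eg: "expect_p p n (\<lambda>T. g T powr r) \<le> A powr r"
    and Eh: "expect_p p n (\<lambda>T. h T powr r) \<le> B powr r"
  shows "expect_p p n (\<lambda>T. (g T + h T) powr r) \<le> (A + B) powr r"
proof -
  define l where "l = A / (A + B)"
  have l: "0 \<le> l" "l \<le> 1" "1 - l = B / (A + B)"
    using AB unfolding l_def by (auto simp: field_simps)
  have pointwise: "(g T + h T) powr r \<le> (A + B) powr r * (l / A powr r * g T powr r + (1 - l) / B powr r * h T powr r)"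
    if T: "T \<in> Pow {1..n}" for T
  proof -
    have "(g T + h T) / (A + B) = (1 - l) * (h T / B) + l * (g T / A)"
      using AB unfolding l(3) unfolding l_def by (simp add: add_divide_distrib)
    then have "((g T + h T) / (A + B)) powr r \<le> (1 - l) * (h T / B) powr r + l * (g T / A) powr r"
      using convex_onD[OF convex_on_powr_nonneg[OF r], of l "h T / B" "g T / A"] gh[OF T] AB l by simp
    then show ?thesis
      using gh[OF T] AB by (simp add: powr_divide field_simps)
  qed
  have "expect_p p n (\<lambda>T. (g T + h T) powr r)
      \<le> (A + B) powr r * (l / A powr r * expect_p p n (\<lambda>T. g T powr r) + (1 - l) / B powr r * expect_p p n (\<lambda>T. h T powr r))"
    using expect_p_mono[OF p pointwise] by (simp only: expect_p_add expect_p_cmult)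
  also have "\<dots> \<le> (A + B) powr r * (l / A powr r * A powr r + (1 - l) / B powr r * B powr r)"
    using Eg Eh l AB by (intro mult_left_mono add_mono) auto
  also have "\<dots> = (A + B) powr r" using AB by simp
  finally show ?thesis .
qed

lemma expect_p_powr_add_le:
  fixes g h :: "nat set \<Rightarrow> real" and A B r p :: real
  assumes p: "0 \<le> p" "p \<le> 1" and r: "r \<ge> 1"
    and gh: "\<And>T. T \<in> Pow {1..n} \<Longrightarrow> 0 \<le> g T \<and> 0 \<le> h T"
    and AB: "0 \<le> A" "0 \<le> B"
    and Eg: "expect_p p n (\<lambda>T. g T powr r) \<le> A powr r"
    and Eh: "expect_p p n (\<lambda>T. h T powr r) \<le> B powr r"
  shows "expect_p p n (\<lambda>T. (g T + h T) powr r) \<le> (A + B) powr r"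
proof -
  define X where "X = expect_p p n (\<lambda>T. (g T + h T) powr r)"
  have X: "X \<ge> 0" unfolding X_def by (rule expect_p_nonneg[OF p]) simp
  have "X powr (1 / r) \<le> A + B"
  proof (rule field_le_epsilon)
    fix e :: real assume e: "e > 0"
    have "A powr r \<le> (A + e / 2) powr r" "B powr r \<le> (B + e / 2) powr r"
      using AB e r by (auto intro: powr_mono2)
    then have "X \<le> (A + e / 2 + (B + e / 2)) powr r"
      unfolding X_def using AB e Eg Eh
      by (intro expect_p_powr_add_le_pos[OF p r gh]) auto
    then have "X powr (1 / r) \<le> ((A + B + e) powr r) powr (1 / r)"
      using X r by (intro powr_mono2) (auto simp: algebra_simps)
    also have "\<dots> = A + B + e" using AB e r by (simp add: powr_powr)
    finally show "X powr (1 / r) \<le> A + B + e" .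
  qed
  then have "(X powr (1 / r)) powr r \<le> (A + B) powr r"
    using X r by (intro powr_mono2) auto
  then show ?thesis using X r unfolding X_def by (simp add: powr_powr)
qed

lemma DERIV_one_plus_powr:
  "-1 < x \<Longrightarrow> ((\<lambda>x. (1 + x) powr r) has_real_derivative r * (1 + x) powr (r - 1)) (at x)"
  using DERIV_fun_powr[of "\<lambda>x. 1 + x" 1 x r] by (auto intro!: derivative_eq_intros)

lemma DERIV_one_minus_powr:
  "x < 1 \<Longrightarrow> ((\<lambda>x. (1 - x) powr r) has_real_derivative - (r * (1 - x) powr (r - 1))) (at x)"
  using DERIV_fun_powr[of "\<lambda>x. 1 - x" "-1" x r] by (auto intro!: derivative_eq_intros)

lemma one_minus_mult_powr_le:
  fixes r u :: real
  assumes r: "r \<ge> 1" and u: "0 \<le> u" "u < 1"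
  shows "(1 - r * u) * (1 + u) powr r \<le> (1 + r * u) * (1 - u) powr r"
proof -
  define G where "G x = (1 + r * x) * (1 - x) powr r - (1 - r * x) * (1 + x) powr r" for x
  have "G 0 \<le> G u"
  proof (rule DERIV_nonneg_imp_nondecreasing[OF u(1)])
    fix x assume x: "0 \<le> x" "x \<le> u"
    then have x1: "x < 1" using u by auto
    define D where "D = r * (1 + r) * x * ((1 + x) powr (r - 1) - (1 - x) powr (r - 1))"
    have "(G has_real_derivative
        r * (1 - x) powr r - (1 + r * x) * (r * (1 - x) powr (r - 1))
        - (- r * (1 + x) powr r + (1 - r * x) * (r * (1 + x) powr (r - 1)))) (at x)"
      unfolding G_def using x x1
      by (intro DERIV_diff DERIV_mult DERIV_one_plus_powr DERIV_one_minus_powr)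
        (auto intro!: derivative_eq_intros)
    moreover have "(1 - x) powr r = (1 - x) * (1 - x) powr (r - 1)"
      and "(1 + x) powr r = (1 + x) * (1 + x) powr (r - 1)"
      using x x1 by (simp_all add: powr_diff)
    ultimately have "(G has_real_derivative D) (at x)"
      unfolding D_def by (simp add: algebra_simps)
    moreover have "(1 - x) powr (r - 1) \<le> (1 + x) powr (r - 1)"
      using x x1 r by (intro powr_mono2) auto
    then have "0 \<le> D" unfolding D_def using r x by simp
    ultimately show "\<exists>y. (G has_real_derivative y) (at x) \<and> 0 \<le> y" by blast
  qed
  then show ?thesis unfolding G_def by simp
qed

lemma two_point_ineq_unit:
  fixes q u :: real
  assumes q: "q \<ge> 2" and u: "0 \<le> u" "u \<le> 1"
  shows "(1 + u) powr q + (1 - u) powr q \<le> 2 * (1 + (q - 1) * u\<^sup>2) powr (q / 2)"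
proof -
  define N where "N x = (1 + x) powr q + (1 - x) powr q" for x :: real
  define V where "V x = 1 + (q - 1) * x\<^sup>2" for x :: real
  define M where "M x = V x powr (q / 2)" for x
  have V: "V x > 0" for x unfolding V_def using q by (auto intro: add_pos_nonneg)
  have "N u / M u \<le> N 0 / M 0"
  proof (rule DERIV_nonpos_imp_decreasing_open[OF u(1)])
    fix x assume x: "0 < x" "x < u"
    define A where "A = (1 + x) powr (q - 1)"
    define B where "B = (1 - x) powr (q - 1)"
    define W where "W = V x powr (q / 2 - 1)"
    have "(N has_real_derivative q * A - q * B) (at x)"
      unfolding N_def A_def B_def using x u
      by (auto intro!: DERIV_one_plus_powr DERIV_one_minus_powr derivative_eq_intros)
    moreover have "(M has_real_derivative (q / 2) * W * ((q - 1) * (2 * x))) (at x)"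
      unfolding M_def W_def using DERIV_fun_powr[of V "(q - 1) * (2 * x)" x "q / 2"] V[of x]
      unfolding V_def by (auto intro!: derivative_eq_intros)
    ultimately have deriv: "((\<lambda>x. N x / M x) has_real_derivative
        ((q * A - q * B) * M x - N x * ((q / 2) * W * ((q - 1) * (2 * x)))) / (M x * M x)) (at x)"
      using V[of x] unfolding M_def by (intro DERIV_divide) auto
    have num: "(q * A - q * B) * M x - N x * ((q / 2) * W * ((q - 1) * (2 * x)))
        = q * W * ((1 - (q - 1) * x) * A - (1 + (q - 1) * x) * B)"
    proof -
      have NA: "N x = (1 + x) * A + (1 - x) * B" and MW: "M x = V x * W"
        unfolding N_def M_def A_def B_def W_def using x u V[of x] by (simp_all add: powr_diff)
      show ?thesis unfolding NA MW V_def by (simp add: algebra_simps power2_eq_square)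
    qed
    have "(1 - (q - 1) * x) * A \<le> (1 + (q - 1) * x) * B"
      unfolding A_def B_def using one_minus_mult_powr_le[of "q - 1" x] q x u by auto
    moreover have "W > 0" unfolding W_def using V[of x] by simp
    ultimately have "q * W * ((1 - (q - 1) * x) * A - (1 + (q - 1) * x) * B) \<le> 0"
      using q by (intro mult_nonneg_nonpos) auto
    then have "((q * A - q * B) * M x - N x * ((q / 2) * W * ((q - 1) * (2 * x)))) / (M x * M x) \<le> 0"
      unfolding num by (rule divide_nonpos_nonneg) simp
    with deriv show "\<exists>y. ((\<lambda>x. N x / M x) has_real_derivative y) (at x) \<and> y \<le> 0"
      by (intro exI conjI)
  next
    show "continuous_on {0..u} (\<lambda>x. N x / M x)"
      unfolding N_def M_def V_def using q u V[unfolded V_def]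
      by (intro continuous_on_powr' continuous_intros) (auto simp: V_def dest: less_imp_neq[symmetric])
  qed
  moreover have "N 0 / M 0 = 2" unfolding N_def M_def V_def by simp
  ultimately show ?thesis using V[of u] unfolding N_def M_def V_def by (simp add: field_simps)
qed

lemma two_point_ineq_of_abs_le:
  fixes q x y :: real
  assumes q: "q \<ge> 2" and xy: "\<bar>y\<bar> \<le> \<bar>x\<bar>"
  shows "\<bar>x + y\<bar> powr q + \<bar>x - y\<bar> powr q \<le> 2 * (x\<^sup>2 + (q - 1) * y\<^sup>2) powr (q / 2)"
proof (cases "x = 0")
  case False
  define w where "w = y / x"
  have w: "\<bar>w\<bar> \<le> 1" unfolding w_def using xy False by (simp add: abs_divide)
  have "\<bar>x + y\<bar> = \<bar>x\<bar> * \<bar>1 + w\<bar>" "\<bar>x - y\<bar> = \<bar>x\<bar> * \<bar>1 - w\<bar>"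
    unfolding w_def using False by (simp_all add: abs_mult[symmetric] algebra_simps)
  then have "\<bar>x + y\<bar> powr q + \<bar>x - y\<bar> powr q = \<bar>x\<bar> powr q * (\<bar>1 + w\<bar> powr q + \<bar>1 - w\<bar> powr q)"
    by (simp add: powr_mult distrib_left)
  also have "\<dots> = \<bar>x\<bar> powr q * ((1 + \<bar>w\<bar>) powr q + (1 - \<bar>w\<bar>) powr q)"
    using w by (cases "w \<ge> 0") auto
  also have "\<dots> \<le> \<bar>x\<bar> powr q * (2 * (1 + (q - 1) * \<bar>w\<bar>\<^sup>2) powr (q / 2))"
    using two_point_ineq_unit[OF q _ w] by (intro mult_left_mono) auto
  also have "\<dots> = 2 * (x\<^sup>2 * (1 + (q - 1) * w\<^sup>2)) powr (q / 2)"
    using q by (simp add: abs_powr_eq_power2_powr powr_mult)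
  also have "x\<^sup>2 * (1 + (q - 1) * w\<^sup>2) = x\<^sup>2 + (q - 1) * y\<^sup>2"
    unfolding w_def using False by (simp add: field_simps power2_eq_square)
  finally show ?thesis .
qed (use xy in simp)

lemma two_point_ineq:
  fixes q x y :: real
  assumes q: "q \<ge> 2"
  shows "\<bar>x + y\<bar> powr q + \<bar>x - y\<bar> powr q \<le> 2 * (x\<^sup>2 + (q - 1) * y\<^sup>2) powr (q / 2)"
proof (cases "\<bar>y\<bar> \<le> \<bar>x\<bar>")
  case False
  have "\<bar>x + y\<bar> powr q + \<bar>x - y\<bar> powr q = \<bar>y + x\<bar> powr q + \<bar>y - x\<bar> powr q"
    by (simp add: abs_minus_commute add.commute)
  also have "\<dots> \<le> 2 * (y\<^sup>2 + (q - 1) * x\<^sup>2) powr (q / 2)"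
    using two_point_ineq_of_abs_le[OF q, of x y] False by simp
  also have "\<dots> \<le> 2 * (x\<^sup>2 + (q - 1) * y\<^sup>2) powr (q / 2)"
  proof -
    have "0 \<le> (q - 2) * (y\<^sup>2 - x\<^sup>2)"
      using q False by (intro mult_nonneg_nonneg) (auto simp: abs_le_square_iff)
    moreover have "0 \<le> y\<^sup>2 + (q - 1) * x\<^sup>2"
      using q by (intro add_nonneg_nonneg mult_nonneg_nonneg) auto
    ultimately show ?thesis
      using q by (intro mult_left_mono powr_mono2) (auto simp: algebra_simps)
  qed
  finally show ?thesis .
qed (use two_point_ineq_of_abs_le[OF q] in blast)

lemma rademacher_sum_moment_bound:
  fixes q a w :: real
  assumes q: "q \<ge> 2"
  shows "expect_p (1/2) n (\<lambda>T. \<bar>a + w * (2 * real (card T) - real n)\<bar> powr q)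
    \<le> (a\<^sup>2 + (q - 1) * real n * w\<^sup>2) powr (q / 2)"
proof (induction n)
  case 0
  then show ?case by (simp add: expect_p_0 abs_powr_eq_power2_powr)
next
  case (Suc n)
  define X where "X T = a + w * (2 * real (card T) - real n)" for T :: "nat set"
  have "expect_p (1/2) (Suc n) (\<lambda>T. \<bar>a + w * (2 * real (card T) - real (Suc n))\<bar> powr q)
     = expect_p (1/2) n (\<lambda>T. (\<bar>X T + w\<bar> powr q + \<bar>X T - w\<bar> powr q) / 2)"
    unfolding expect_p_Suc X_def
    by (intro expect_p_cong) (simp add: card_insert_Suc_of_Pow_atLeastAtMost algebra_simps)
  also have "\<dots> \<le> expect_p (1/2) n (\<lambda>T. ((X T)\<^sup>2 + (q - 1) * w\<^sup>2) powr (q / 2))"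
    using two_point_ineq[OF q] by (intro expect_p_mono) (auto simp: mult.commute)
  also have "\<dots> \<le> ((a\<^sup>2 + (q - 1) * real n * w\<^sup>2) + (q - 1) * w\<^sup>2) powr (q / 2)"
  proof (rule expect_p_powr_add_le)
    show "expect_p (1/2) n (\<lambda>T. ((X T)\<^sup>2) powr (q / 2)) \<le> (a\<^sup>2 + (q - 1) * real n * w\<^sup>2) powr (q / 2)"
      using Suc.IH unfolding X_def by (simp add: abs_powr_eq_power2_powr)
  qed (use q in \<open>auto simp: expect_p_const\<close>)
  also have "(a\<^sup>2 + (q - 1) * real n * w\<^sup>2) + (q - 1) * w\<^sup>2 = a\<^sup>2 + (q - 1) * real (Suc n) * w\<^sup>2"
    by (simp add: algebra_simps)
  finally show ?case .
qed

lemma expect_half_card_centered: "expect_p (1/2) n (\<lambda>T. 2 * real (card T) - real n) = 0"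
proof (induction n)
  case (Suc n)
  have "expect_p (1/2) (Suc n) (\<lambda>T. 2 * real (card T) - real (Suc n))
      = expect_p (1/2) n (\<lambda>T. 2 * real (card T) - real n)"
    unfolding expect_p_Suc
    by (intro expect_p_cong) (simp add: card_insert_Suc_of_Pow_atLeastAtMost algebra_simps)
  with Suc show ?case by simp
qed (simp add: expect_p_0)

text \<open>Jensen's inequality for a distribution \<open>h\<close> written as the mixture of an atom of mass \<open>p\<close>
  at \<open>i\<^sub>0\<close> and the conditional distribution on the remaining mass \<open>1 - p\<close>.\<close>
lemma convex_on_sum_split_atom:
  fixes h Z :: "'a \<Rightarrow> real" and \<phi> :: "real \<Rightarrow> real"
  assumes I: "finite I" "i\<^sub>0 \<in> I" and \<phi>: "convex_on UNIV \<phi>"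
    and h: "\<And>i. i \<in> I \<Longrightarrow> 0 \<le> h i" "(\<Sum>i\<in>I. h i) = 1"
    and p: "0 \<le> p" "p \<le> h i\<^sub>0" "p < 1"
  shows "p * \<phi> (Z i\<^sub>0) + (1 - p) * \<phi> (((\<Sum>i\<in>I. h i * Z i) - p * Z i\<^sub>0) / (1 - p))
    \<le> (\<Sum>i\<in>I. h i * \<phi> (Z i))"
proof -
  define \<omega> where "\<omega> i = (h i - (if i = i\<^sub>0 then p else 0)) / (1 - p)" for i
  have \<omega>_sum: "(\<Sum>i\<in>I. \<omega> i * F i) = ((\<Sum>i\<in>I. h i * F i) - p * F i\<^sub>0) / (1 - p)" for F
  proof -
    have "(\<Sum>i\<in>I. \<omega> i * F i) = (\<Sum>i\<in>I. (h i * F i - (if i = i\<^sub>0 then p * F i else 0)) / (1 - p))"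
      unfolding \<omega>_def by (intro sum.cong) (auto simp: algebra_simps)
    then show ?thesis
      using I by (simp add: sum_divide_distrib[symmetric] sum_subtractf sum.delta')
  qed
  have "\<phi> (\<Sum>i\<in>I. \<omega> i *\<^sub>R Z i) \<le> (\<Sum>i\<in>I. \<omega> i * \<phi> (Z i))"
  proof (rule convex_on_sum[OF I(1) _ \<phi>])
    show "(\<Sum>i\<in>I. \<omega> i) = 1"
      using \<omega>_sum[of "\<lambda>_. 1"] h(2) p by simp
    show "\<And>i. i \<in> I \<Longrightarrow> 0 \<le> \<omega> i"
      unfolding \<omega>_def using h(1) p by auto
  qed (use I in auto)
  then have "\<phi> (((\<Sum>i\<in>I. h i * Z i) - p * Z i\<^sub>0) / (1 - p))
      \<le> ((\<Sum>i\<in>I. h i * \<phi> (Z i)) - p * \<phi> (Z i\<^sub>0)) / (1 - p)"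
    by (simp add: \<omega>_sum)
  then show ?thesis using p by (simp add: field_simps)
qed

text \<open>A \<open>p\<close>-biased bit with \<open>p \<le> 2\<^sup>-\<^sup>k\<close> is simulated by \<open>k\<close> fair bits: it takes its rare value
  on a sub-event of "all \<open>k\<close> bits are zero", and the moment bound for Rademacher sums is transferred
  by Jensen's inequality on the complementary conditional distribution.\<close>
lemma biased_bit_moment_bound:
  fixes p q a b :: real and k :: nat
  assumes p: "0 < p" and k: "k \<ge> 1" and kp: "2 ^ k * p \<le> 1" and q: "q \<ge> 2"
  defines "c \<equiv> sqrt (real k / (q - 1))"
  shows "p * \<bar>a - c * b\<bar> powr q + (1 - p) * \<bar>a + c * (p / (1 - p)) * b\<bar> powr q
    \<le> (a\<^sup>2 + b\<^sup>2) powr (q / 2)"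
proof -
  define w where "w = c * b / real k"
  define Z where "Z T = w * (2 * real (card T) - real k)" for T :: "nat set"
  have "(2::real) \<le> 2 ^ k" using k by (metis power_one_right power_increasing one_le_numeral)
  then have "2 * p \<le> 2 ^ k * p" using p by (intro mult_right_mono) auto
  then have p1: "p < 1" using kp p by linarith
  have "p \<le> (1/2) ^ k" using kp by (simp add: field_simps power_one_over)
  moreover have "(\<Sum>T\<in>Pow {1..k}. (1/2::real) ^ k) = 1"
    by (simp add: card_Pow power_one_over)
  ultimately have "p * \<bar>a + Z {}\<bar> powr q
      + (1 - p) * \<bar>a + ((\<Sum>T\<in>Pow {1..k}. (1/2) ^ k * Z T) - p * Z {}) / (1 - p)\<bar> powr q
    \<le> (\<Sum>T\<in>Pow {1..k}. (1/2) ^ k * \<bar>a + Z T\<bar> powr q)"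
    using p p1 q convex_on_abs_add_powr[of q a]
    by (intro convex_on_sum_split_atom[where \<phi> = "\<lambda>z. \<bar>a + z\<bar> powr q"]) auto
  also have "\<dots> \<le> (a\<^sup>2 + (q - 1) * real k * w\<^sup>2) powr (q / 2)"
    using rademacher_sum_moment_bound[OF q, where a = a and w = w and n = k] unfolding Z_def expect_half_eq_sum .
  also have "(q - 1) * real k * w\<^sup>2 = b\<^sup>2"
  proof -
    have qc: "(q - 1) * c\<^sup>2 = real k" unfolding c_def using q by simp
    have "(q - 1) * real k * w\<^sup>2 = ((q - 1) * c\<^sup>2) * b\<^sup>2 / real k"
      unfolding w_def using k by (simp add: power_divide power_mult_distrib field_simps power2_eq_square)
    then show ?thesis unfolding qc using k by simp
  qed
  also have "Z {} = - (c * b)"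
    unfolding Z_def w_def using k by simp
  also have "(\<Sum>T\<in>Pow {1..k}. (1/2) ^ k * Z T) = 0"
    using expect_half_card_centered[of k] unfolding Z_def expect_half_eq_sum
    by (simp add: sum_distrib_left[symmetric] mult.left_commute[of w])
  finally show ?thesis using p1 by (simp add: algebra_simps)
qed

text \<open>\<open>bit_hypercontractive p q \<rho>\<close> is the inequality \<open>\<parallel>a + \<rho> b u\<parallel>\<^sub>q \<le> \<parallel>a + b u\<parallel>\<^sub>2\<close> on a single coordinate,
  where the Walsh function \<open>u\<close> equals \<open>-sqrt ((1 - p) / p)\<close> with probability \<open>p\<close> and
  \<open>sqrt (p / (1 - p))\<close> otherwise.\<close>
definition bit_hypercontractive :: "real \<Rightarrow> real \<Rightarrow> real \<Rightarrow> bool" where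
  "bit_hypercontractive p q \<rho> \<longleftrightarrow> (\<forall>a b.
     p * \<bar>a - \<rho> * sqrt ((1 - p) / p) * b\<bar> powr q + (1 - p) * \<bar>a + \<rho> * sqrt (p / (1 - p)) * b\<bar> powr q
       \<le> (a\<^sup>2 + b\<^sup>2) powr (q / 2))"

lemma sqrt_odds_mult_inverse: "0 < p \<Longrightarrow> p < 1 \<Longrightarrow> sqrt ((1 - p) / p) * sqrt (p / (1 - p)) = 1"
  by (simp add: real_sqrt_mult[symmetric])

lemma bit_hypercontractive_biased:
  fixes p q :: real and k :: nat
  assumes p: "0 < p" "p < 1" and k: "k \<ge> 1" and kp: "2 ^ k * p \<le> 1" and q: "q \<ge> 2"
  shows "bit_hypercontractive p q (sqrt (real k / (q - 1)) * sqrt (p / (1 - p)))"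
proof -
  define c where "c = sqrt (real k / (q - 1))"
  have e1: "c * sqrt (p / (1 - p)) * sqrt ((1 - p) / p) * b = c * b"
    and e2: "c * sqrt (p / (1 - p)) * sqrt (p / (1 - p)) * b = c * (p / (1 - p)) * b" for b
    using sqrt_odds_mult_inverse[OF p] p by (simp_all add: mult_ac)
  show ?thesis
    unfolding bit_hypercontractive_def c_def[symmetric] e1 e2
    using biased_bit_moment_bound[OF p(1) k kp q] unfolding c_def by blast
qed

definition walsh_factor :: "real \<Rightarrow> nat \<Rightarrow> nat set \<Rightarrow> real" where
  "walsh_factor p i T = (if i \<in> T then - sqrt ((1 - p) / p) else sqrt (p / (1 - p)))"

lemma walsh_u_eq_prod: "finite S \<Longrightarrow> walsh_u p S T = (\<Prod>i\<in>S. walsh_factor p i T)"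
  unfolding walsh_u_def prod.Int_Diff[of S _ T] by (simp add: walsh_factor_def)

lemma walsh_u_empty: "walsh_u p {} T = 1"
  unfolding walsh_u_def by simp

lemma walsh_u_insert_point:
  "S \<in> Pow {1..n} \<Longrightarrow> walsh_u p S (insert (Suc n) T) = walsh_u p S T"
  by (auto simp: walsh_u_eq_prod finite_subset walsh_factor_def intro!: prod.cong)

lemma walsh_u_insert_index:
  assumes "S \<in> Pow {1..n}"
  shows "walsh_u p (insert (Suc n) S) T = walsh_factor p (Suc n) T * walsh_u p S T"
proof -
  have "finite S" "Suc n \<notin> S" using assms by (auto intro: finite_subset)
  then show ?thesis by (simp add: walsh_u_eq_prod)
qed

text \<open>The noise operator \<open>T\<^sub>\<rho>\<close> multiplies \<open>\<hat>f(S)\<close> by \<open>\<rho>\<^bsup>|S|\<^esup>\<close>. The induction conditions on the last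
  coordinate, applies the one-coordinate inequality pointwise and recombines with Minkowski's
  inequality in \<open>L\<^bsup>q/2\<^esup>\<close>.\<close>
lemma noise_hypercontractive:
  fixes p q \<rho> :: real and c :: "nat set \<Rightarrow> real"
  assumes p: "0 < p" "p < 1" and q: "q \<ge> 2" and bit: "bit_hypercontractive p q \<rho>"
  shows "expect_p p n (\<lambda>T. \<bar>\<Sum>S\<in>Pow {1..n}. \<rho> ^ card S * c S * walsh_u p S T\<bar> powr q)
           \<le> (\<Sum>S\<in>Pow {1..n}. (c S)\<^sup>2) powr (q / 2)"
proof (induction n arbitrary: c)
  case 0
  then show ?case by (simp add: expect_p_0 walsh_u_empty abs_powr_eq_power2_powr)
next
  case (Suc n)
  define A where "A T = (\<Sum>S\<in>Pow {1..n}. \<rho> ^ card S * c S * walsh_u p S T)" for T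
  define B where "B T = (\<Sum>S\<in>Pow {1..n}. \<rho> ^ card S * c (insert (Suc n) S) * walsh_u p S T)" for T
  have split: "(\<Sum>S\<in>Pow {1..Suc n}. \<rho> ^ card S * c S * walsh_u p S T)
      = A T + \<rho> * walsh_factor p (Suc n) T * B T" for T
    unfolding sum_Pow_atLeastAtMost_Suc A_def B_def sum_distrib_left
    by (intro arg_cong2[where f = "(+)"] sum.cong refl)
      (simp_all add: card_insert_Suc_of_Pow_atLeastAtMost walsh_u_insert_index)
  have A_insert: "A (insert (Suc n) T) = A T" and B_insert: "B (insert (Suc n) T) = B T" for T
    unfolding A_def B_def by (auto intro!: sum.cong simp: walsh_u_insert_point)
  have "expect_p p (Suc n) (\<lambda>T. \<bar>\<Sum>S\<in>Pow {1..Suc n}. \<rho> ^ card S * c S * walsh_u p S T\<bar> powr q)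
      = expect_p p n (\<lambda>T. p * \<bar>A T - \<rho> * sqrt ((1 - p) / p) * B T\<bar> powr q
                         + (1 - p) * \<bar>A T + \<rho> * sqrt (p / (1 - p)) * B T\<bar> powr q)"
    unfolding split expect_p_Suc A_insert B_insert
    by (intro expect_p_cong) (auto simp: walsh_factor_def)
  also have "\<dots> \<le> expect_p p n (\<lambda>T. ((A T)\<^sup>2 + (B T)\<^sup>2) powr (q / 2))"
    using p bit unfolding bit_hypercontractive_def by (intro expect_p_mono) auto
  also have "\<dots> \<le> ((\<Sum>S\<in>Pow {1..n}. (c S)\<^sup>2) + (\<Sum>S\<in>Pow {1..n}. (c (insert (Suc n) S))\<^sup>2)) powr (q / 2)"
  proof (rule expect_p_powr_add_le)
    show "expect_p p n (\<lambda>T. ((A T)\<^sup>2) powr (q / 2)) \<le> (\<Sum>S\<in>Pow {1..n}. (c S)\<^sup>2) powr (q / 2)"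
      using Suc.IH[of c] unfolding A_def by (simp add: abs_powr_eq_power2_powr)
    show "expect_p p n (\<lambda>T. ((B T)\<^sup>2) powr (q / 2))
        \<le> (\<Sum>S\<in>Pow {1..n}. (c (insert (Suc n) S))\<^sup>2) powr (q / 2)"
      using Suc.IH[of "\<lambda>S. c (insert (Suc n) S)"] unfolding B_def by (simp add: abs_powr_eq_power2_powr)
  qed (use p q in \<open>auto intro: sum_nonneg\<close>)
  finally show ?case unfolding sum_Pow_atLeastAtMost_Suc .
qed

lemma walsh_factor_mult_add_one:
  assumes "0 < p" "p < 1"
  shows "walsh_factor p i T * walsh_factor p i T' + 1
    = (if (i \<in> T) \<noteq> (i \<in> T') then 0 else if i \<in> T then 1 / p else 1 / (1 - p))"
  using assms sqrt_odds_mult_inverse[OF assms]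
  by (auto simp: walsh_factor_def real_sqrt_mult[symmetric] field_simps)

lemma sum_walsh_u_mult:
  assumes p: "0 < p" "p < 1" and T: "T \<in> Pow {1..n}" and T': "T' \<in> Pow {1..n}"
  shows "(\<Sum>S\<in>Pow {1..n}. walsh_u p S T * walsh_u p S T') = (if T = T' then 1 / mu_p p n T else 0)"
proof -
  have "(\<Sum>S\<in>Pow {1..n}. walsh_u p S T * walsh_u p S T')
      = (\<Sum>S\<in>Pow {1..n}. (\<Prod>i\<in>S. walsh_factor p i T * walsh_factor p i T') * (\<Prod>i\<in>{1..n} - S. 1))"
    by (intro sum.cong) (auto simp: walsh_u_eq_prod finite_subset prod.distrib)
  also have "\<dots> = (\<Prod>i\<in>{1..n}. walsh_factor p i T * walsh_factor p i T' + 1)"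
    by (simp add: prod_add)
  finally have sum_eq_prod: "(\<Sum>S\<in>Pow {1..n}. walsh_u p S T * walsh_u p S T')
      = (\<Prod>i\<in>{1..n}. walsh_factor p i T * walsh_factor p i T' + 1)" .
  show ?thesis
  proof (cases "T = T'")
    case False
    then obtain i where "i \<in> {1..n}" "(i \<in> T) \<noteq> (i \<in> T')" using T T' by blast
    then show ?thesis
      unfolding sum_eq_prod walsh_factor_mult_add_one[OF p] using False by (auto intro!: prod_zero)
  next
    case True
    have "{1..n} \<inter> {i. i \<in> T} = T" "card ({1..n} \<inter> - {i. i \<in> T}) = n - card T"
      using T by (auto simp: Compl_eq_Diff_UNIV Int_Diff[symmetric] card_Diff_subset finite_subset)
    with True p show ?thesis
      unfolding sum_eq_prod walsh_factor_mult_add_one[OF p]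
      by (simp add: prod.If_cases mu_p_def power_one_over)
  qed
qed

lemma fourier_expansion:
  assumes p: "0 < p" "p < 1" and T: "T \<in> Pow {1..n}"
  shows "(\<Sum>S\<in>Pow {1..n}. fourier_coeff p n f S * walsh_u p S T) = f T"
proof -
  have "(\<Sum>S\<in>Pow {1..n}. fourier_coeff p n f S * walsh_u p S T)
      = (\<Sum>T'\<in>Pow {1..n}. mu_p p n T' * f T' * (\<Sum>S\<in>Pow {1..n}. walsh_u p S T' * walsh_u p S T))"
    unfolding fourier_coeff_def expect_p_def sum_distrib_left sum_distrib_right
    by (subst sum.swap) (simp add: mult_ac)
  also have "\<dots> = (\<Sum>T'\<in>Pow {1..n}. if T' = T then f T else 0)"
  proof (intro sum.cong refl)
    fix T' assume T': "T' \<in> Pow {1..n}"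
    show "mu_p p n T' * f T' * (\<Sum>S\<in>Pow {1..n}. walsh_u p S T' * walsh_u p S T)
        = (if T' = T then f T else 0)"
      unfolding sum_walsh_u_mult[OF p T' T] using mu_p_pos[OF p, of n T'] by auto
  qed
  also have "\<dots> = f T" using T by simp
  finally show ?thesis .
qed

lemma parseval:
  assumes p: "0 < p" "p < 1"
  shows "(\<Sum>S\<in>Pow {1..n}. (fourier_coeff p n f S)\<^sup>2) = expect_p p n (\<lambda>T. (f T)\<^sup>2)"
proof -
  have "expect_p p n (\<lambda>T. (f T)\<^sup>2)
      = (\<Sum>T\<in>Pow {1..n}. mu_p p n T * f T * (\<Sum>S\<in>Pow {1..n}. fourier_coeff p n f S * walsh_u p S T))"
    unfolding expect_p_def power2_eq_square
    using fourier_expansion[OF p, of _ n f] by (intro sum.cong refl) simp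
  also have "\<dots> = (\<Sum>S\<in>Pow {1..n}. fourier_coeff p n f S * expect_p p n (\<lambda>T. f T * walsh_u p S T))"
    unfolding expect_p_def sum_distrib_left by (subst sum.swap) (simp add: mult_ac)
  finally show ?thesis by (simp add: fourier_coeff_def power2_eq_square)
qed

lemma low_degree_moment_bound:
  fixes p q \<rho> :: real and f :: "nat set \<Rightarrow> real"
  assumes p: "0 < p" "p < 1" and q: "q \<ge> 2" and \<rho>: "0 < \<rho>" "\<rho> \<le> 1"
    and bit: "bit_hypercontractive p q \<rho>"
    and deg: "\<forall>S. S \<subseteq> {1..n} \<and> card S > d \<longrightarrow> fourier_coeff p n f S = 0"
  shows "expect_p p n (\<lambda>T. \<bar>f T\<bar> powr q) \<le> ((1 / \<rho>\<^sup>2) ^ d * expect_p p n (\<lambda>T. (f T)\<^sup>2)) powr (q / 2)"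
proof -
  define c where "c S = fourier_coeff p n f S / \<rho> ^ card S" for S
  have "expect_p p n (\<lambda>T. \<bar>f T\<bar> powr q)
      = expect_p p n (\<lambda>T. \<bar>\<Sum>S\<in>Pow {1..n}. \<rho> ^ card S * c S * walsh_u p S T\<bar> powr q)"
    unfolding c_def using \<rho> fourier_expansion[OF p, of _ n f] by (intro expect_p_cong) simp
  also have "\<dots> \<le> (\<Sum>S\<in>Pow {1..n}. (c S)\<^sup>2) powr (q / 2)"
    by (rule noise_hypercontractive[OF p q bit])
  also have "\<dots> \<le> (\<Sum>S\<in>Pow {1..n}. (1 / \<rho>\<^sup>2) ^ d * (fourier_coeff p n f S)\<^sup>2) powr (q / 2)"
  proof (intro powr_mono2 sum_mono sum_nonneg)
    fix S assume S: "S \<in> Pow {1..n}"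
    show "(c S)\<^sup>2 \<le> (1 / \<rho>\<^sup>2) ^ d * (fourier_coeff p n f S)\<^sup>2"
    proof (cases "card S \<le> d")
      case True
      have "(c S)\<^sup>2 = (1 / \<rho>\<^sup>2) ^ card S * (fourier_coeff p n f S)\<^sup>2"
        unfolding c_def by (simp add: power_divide power_mult[symmetric] mult.commute)
      also have "\<dots> \<le> (1 / \<rho>\<^sup>2) ^ d * (fourier_coeff p n f S)\<^sup>2"
        using True \<rho> by (intro mult_right_mono power_increasing) (auto simp: power_le_one)
      finally show ?thesis .
    qed (use deg S c_def in auto)
  qed (use q in auto)
  also have "\<dots> = ((1 / \<rho>\<^sup>2) ^ d * expect_p p n (\<lambda>T. (f T)\<^sup>2)) powr (q / 2)"
    unfolding sum_distrib_left[symmetric] parseval[OF p] ..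
  finally show ?thesis .
qed

lemma qnorm_p_low_degree_le:
  fixes p q \<rho> :: real and f :: "nat set \<Rightarrow> real"
  assumes p: "0 < p" "p < 1" and q: "q \<ge> 2" and \<rho>: "0 < \<rho>" "\<rho> \<le> 1"
    and bit: "bit_hypercontractive p q \<rho>"
    and deg: "\<forall>S. S \<subseteq> {1..n} \<and> card S > d \<longrightarrow> fourier_coeff p n f S = 0"
  shows "qnorm_p p n q f \<le> (1 / \<rho>\<^sup>2) powr (real d / 2) * qnorm_p p n 2 f"
proof -
  define R where "R = 1 / \<rho>\<^sup>2"
  define V where "V = expect_p p n (\<lambda>T. (f T)\<^sup>2)"
  have R: "0 < R" unfolding R_def using \<rho> by simp
  have V: "0 \<le> V" unfolding V_def using p by (intro expect_p_nonneg) auto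
  have "qnorm_p p n q f \<le> ((R ^ d * V) powr (q / 2)) powr (1 / q)"
    unfolding qnorm_p_def R_def V_def using low_degree_moment_bound[OF assms] p q
    by (intro powr_mono2 expect_p_nonneg) auto
  also have "\<dots> = (R powr real d * V) powr (1 / 2)"
    using q R by (simp add: powr_powr powr_realpow)
  also have "\<dots> = R powr (real d / 2) * V powr (1 / 2)"
    using R V by (simp add: powr_mult powr_powr)
  also have "V powr (1 / 2) = qnorm_p p n 2 f"
    unfolding qnorm_p_def V_def by (simp add: abs_powr_eq_power2_powr)
  finally show ?thesis unfolding R_def .
qed

lemma floor_log_inverse_bounds:
  fixes p :: real
  assumes p: "0 < p" "p \<le> 1/2" and k: "k = nat \<lfloor>log 2 (1 / p)\<rfloor>"
  shows "1 \<le> k" and "2 ^ k * p \<le> 1" and "real k * p \<le> 1 - p"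
proof -
  have L: "1 \<le> log 2 (1 / p)" using p by (simp add: le_log_iff field_simps)
  then show "1 \<le> k" unfolding k by linarith
  have "2 ^ k = 2 powr real k" by (simp add: powr_realpow)
  also have "\<dots> \<le> 2 powr log 2 (1 / p)" using L unfolding k by (intro powr_mono) auto
  also have "\<dots> = 1 / p" using p by simp
  finally show kp: "2 ^ k * p \<le> 1" using p by (simp add: field_simps)
  have "Suc k \<le> 2 ^ k" using less_exp[of k] by (simp only: Suc_le_eq)
  then have "real (Suc k) \<le> 2 ^ k" by (metis of_nat_le_iff of_nat_numeral of_nat_power)
  then have "real (Suc k) * p \<le> 2 ^ k * p" using p by (intro mult_right_mono) auto
  then show "real k * p \<le> 1 - p" using kp by (simp add: algebra_simps)
qed

theorem proposition3p4:
  fixes p q :: real and n d :: nat and f :: "nat set \<Rightarrow> real"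
  assumes "0 < p" and "p \<le> 1/2"
    and "\<forall>S. S \<subseteq> {1..n} \<and> card S > d \<longrightarrow> fourier_coeff p n f S = 0"
    and "q \<ge> 2"
  shows "qnorm_p p n q f \<le>
    ((1 - p) / (p * of_int \<lfloor>log 2 (1 / p)\<rfloor>) * (q - 1)) powr (real d / 2) * qnorm_p p n 2 f"
proof -
  note p = assms(1,2) and deg = assms(3) and q = assms(4)
  have p1: "p < 1" using p by simp
  define k where "k = nat \<lfloor>log 2 (1 / p)\<rfloor>"
  define \<rho> where "\<rho> = sqrt (real k / (q - 1)) * sqrt (p / (1 - p))"
  note k = floor_log_inverse_bounds[OF p k_def]
  have "real k * p \<le> (1 - p) * 1" using k(3) by simp
  also have "\<dots> \<le> (1 - p) * (q - 1)" using p1 q by (intro mult_left_mono) auto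
  finally have kp: "real k * p \<le> (1 - p) * (q - 1)" .
  have \<rho>2: "\<rho>\<^sup>2 = (real k * p) / ((1 - p) * (q - 1))"
    unfolding \<rho>_def using p q by (simp add: power_mult_distrib)
  have \<rho>0: "0 < \<rho>" unfolding \<rho>_def using p p1 q k(1) by simp
  have "\<rho>\<^sup>2 \<le> 1" unfolding \<rho>2 using kp p1 q by (simp add: pos_divide_le_eq)
  with \<rho>0 have \<rho>: "0 < \<rho>" "\<rho> \<le> 1" by (simp_all add: power_le_one_iff)
  have bit: "bit_hypercontractive p q \<rho>"
    unfolding \<rho>_def using bit_hypercontractive_biased[OF p(1) p1 k(1,2) q] .
  have "1 / \<rho>\<^sup>2 = (1 - p) / (p * of_int \<lfloor>log 2 (1 / p)\<rfloor>) * (q - 1)"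
    unfolding \<rho>2 using p q k(1) by (simp add: k_def)
  then show ?thesis using qnorm_p_low_degree_le[OF p(1) p1 q \<rho> bit deg] by simp
qed

end
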